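(* Fix $n\ge1$ and an integer $q$ with $1\le q\le n$. Let $S=S_{u,b}$ where $(u,b)$ is drawn uniformly from $(\{0,1\}^n\setminus\{0^n\})\times\{0,1\}$. Any classical (possibly randomized) algorithm that is given $q$ samples drawn uniformly from $S$ and outputs some $y\in\{0,1\}^n$ satisfies \[ \Pr[y\in\bar S]\le \frac12+\frac{1}{2\left(2^{\,n-q+1}-1\right)}, \] where the probability is over the choice of $S$, the samples and the internal randomness of the algorithm. In particular, for every such algorithm there is some $S\in\mathcal{F}_{\mathrm{BV}}$ on which its success probability is at most this bound.
   Context: For $u\in\{0,1\}^n\setminus\{0^n\}$ and $b\in\{0,1\}$, $S_{u,b}=\{x\in\{0,1\}^n : u\cdot x\equiv b\pmod 2\}$, $\mathcal{F}_{\mathrm{BV}}$ is the family of all such sets, and $\bar S=\{0,1\}^n\setminus S$. Success means outputting an element of the complement $\bar S$. *)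

theory Defs
  imports "HOL-Probability.Probability"
begin

text \<open>The Boolean cube {0,1}^n, as bool lists of length n (True = 1).\<close>
definition cube :: "nat \<Rightarrow> bool list set" where
  "cube n = {x. length x = n}"

definition dotp :: "bool list \<Rightarrow> bool list \<Rightarrow> bool" where
  "dotp u x = odd (length (filter id (map2 (\<and>) u x)))"

definition BV_set :: "nat \<Rightarrow> bool list \<Rightarrow> bool \<Rightarrow> bool list set" where
  "BV_set n u b = {x \<in> cube n. dotp u x = b}"

text \<open>Success probability of a randomized algorithm A (samples \<Rightarrow> distribution of outputs)
  on a fixed set S_{u,b}: q i.i.d. uniform samples from S, then output y; success iff y in the
  complement of S.\<close>
definition success_on :: "nat \<Rightarrow> nat \<Rightarrow> (bool list list \<Rightarrow> bool list pmf) \<Rightarrow> bool list \<Rightarrow> bool \<Rightarrow> real" where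
  "success_on n q A u b =
     measure_pmf.prob
       (bind_pmf (replicate_pmf q (pmf_of_set (BV_set n u b))) A)
       (cube n - BV_set n u b)"

definition success :: "nat \<Rightarrow> nat \<Rightarrow> (bool list list \<Rightarrow> bool list pmf) \<Rightarrow> real" where
  "success n q A =
     measure_pmf.prob
       (bind_pmf (pmf_of_set ((cube n - {replicate n False}) \<times> (UNIV :: bool set)))
          (\<lambda>(u, b). bind_pmf (replicate_pmf q (pmf_of_set (BV_set n u b)))
             (\<lambda>xs. map_pmf (\<lambda>y. y \<in> cube n - BV_set n u b) (A xs))))
       {True}"

end

theory Submission
  imports Defs
begin

text \<open>Encode a parameter (u, b) as the vector b # u in {0,1}^(n+1). A sample x lies in S_{u,b}
  iff b # u is orthogonal to True # x, so the parameters consistent with q samples are the nonzero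
  vectors of a subspace N with |N| >= 2^(n-q+1). An output y escapes S_{u,b} iff
  (b # u) . (True # y) = 1, a linear condition holding on at most half of N. All S_{u,b} have
  size 2^(n-1), so given the samples the consistent parameters are equally likely, and the
  conditional success probability is at most (|N|/2) / (|N| - 1) <= 1/2 + 1/(2 (2^(n-q+1) - 1)).
  Averaging gives the bound, and some parameter does no better than the average.\<close>

lemma card_eq_card_if_involution:
  assumes "\<And>x. x \<in> C \<Longrightarrow> \<tau> x \<in> C" "\<And>x. x \<in> C \<Longrightarrow> \<tau> (\<tau> x) = x"
    and "\<And>x. x \<in> C \<Longrightarrow> P (\<tau> x) \<longleftrightarrow> \<not> P x"
  shows "card {x \<in> C. P x} = card {x \<in> C. \<not> P x}"
  by (rule bij_betw_same_card[of \<tau>], rule bij_betw_byWitness[of _ \<tau>]) (use assms in auto)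

lemma card_filter_add_card_filter_not:
  "finite C \<Longrightarrow> card {x \<in> C. P x} + card {x \<in> C. \<not> P x} = card C"
  by (subst card_Un_disjoint[symmetric]) (auto intro: arg_cong[where f = card])

lemma sum_card_filter_swap:
  assumes "finite A" "finite B"
  shows "(\<Sum>a\<in>A. card {b \<in> B. R a b}) = (\<Sum>b\<in>B. card {a \<in> A. R a b})"
  using sum.swap_restrict[OF assms, of "\<lambda>_ _. 1 :: nat" R] by simp

lemma ex_le_of_sum_le:
  fixes f :: "'a \<Rightarrow> real" and c :: real
  assumes "finite A" "A \<noteq> {}" "sum f A \<le> c * card A"
  shows "\<exists>a\<in>A. f a \<le> c"
proof (rule ccontr)
  assume "\<not> (\<exists>a\<in>A. f a \<le> c)"
  then have "(\<Sum>a\<in>A. c) < sum f A"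
    using assms(1,2) by (intro sum_strict_mono) auto
  then show False
    using assms(3) by (simp add: mult.commute)
qed

lemma le_half_bound:
  fixes c e M :: real
  assumes "2 \<le> M" "M \<le> c" "2 * e \<le> c"
  shows "e \<le> (1/2 + 1 / (2 * (M - 1))) * (c - 1)"
proof -
  have "1 \<le> (c - 1) / (M - 1)"
    using assms(1,2) by simp
  then have "1 / 2 \<le> (c - 1) / (M - 1) / 2"
    by (rule divide_right_mono) simp
  have "e \<le> (c - 1) / 2 + 1 / 2"
    using assms(3) by (simp add: field_simps)
  also have "\<dots> \<le> (c - 1) / 2 + (c - 1) / (M - 1) / 2"
    using \<open>1 / 2 \<le> (c - 1) / (M - 1) / 2\<close> by linarith
  also have "\<dots> = (1/2 + 1 / (2 * (M - 1))) * (c - 1)"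
    using assms(1) by (simp add: field_simps)
  finally show ?thesis .
qed

lemma replicate_pmf_of_set:
  assumes "finite S" "S \<noteq> {}"
  shows "replicate_pmf q (pmf_of_set S) = pmf_of_set {xs. set xs \<subseteq> S \<and> length xs = q}"
proof (induction q)
  case 0
  have "{xs. set xs \<subseteq> S \<and> length xs = 0} = {[]}"
    by auto
  then show ?case
    by (simp add: pmf_of_set_singleton)
next
  case (Suc q)
  let ?L = "{xs. set xs \<subseteq> S \<and> length xs = q}"
  obtain s where "s \<in> S"
    using assms(2) by blast
  then have L: "finite ?L" "?L \<noteq> {}"
    using finite_lists_length_eq[OF assms(1), of q] by (auto intro!: exI[of _ "replicate q s"])
  have "replicate_pmf (Suc q) (pmf_of_set S) = pmf_of_set S \<bind> (\<lambda>x. pmf_of_set (Cons x ` ?L))"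
    using L by (simp add: Suc.IH map_pmf_def[symmetric] map_pmf_of_set_inj)
  also have "\<dots> = pmf_of_set (\<Union>x\<in>S. Cons x ` ?L)"
    using assms L by (intro pmf_of_set_UN[symmetric]) (auto simp: card_image disjoint_family_on_def)
  also have "(\<Union>x\<in>S. Cons x ` ?L) = {xs. set xs \<subseteq> S \<and> length xs = Suc q}"
    by (auto simp: length_Suc_conv)
  finally show ?case .
qed

lemma measure_bind_pmf_of_set:
  assumes "finite A" "A \<noteq> {}"
  shows "measure_pmf.prob (pmf_of_set A \<bind> f) X = (\<Sum>a\<in>A. measure_pmf.prob (f a) X) / card A"
proof -
  have "ennreal (measure_pmf.prob (pmf_of_set A \<bind> f) X) = (\<Sum>a\<in>A. emeasure (f a) X) / card A"
    using assms by (simp add: measure_pmf.emeasure_eq_measure[symmetric] nn_integral_pmf_of_set)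
  also have "\<dots> = ennreal ((\<Sum>a\<in>A. measure_pmf.prob (f a) X) / card A)"
    using assms by (simp add: measure_pmf.emeasure_eq_measure ennreal_of_nat_eq_real_of_nat
      divide_ennreal sum_nonneg card_gt_0_iff)
  finally show ?thesis
    by (simp add: sum_nonneg)
qed

lemma sum_measure_pmf_le:
  assumes "finite P" "\<And>y. y \<in> set_pmf D \<Longrightarrow> real (card {p \<in> P. y \<in> T p}) \<le> c"
  shows "(\<Sum>p\<in>P. measure_pmf.prob D (T p)) \<le> c"
proof -
  have "(\<Sum>p\<in>P. measure_pmf.prob D (T p)) = (\<Sum>p\<in>P. \<integral>y. indicator (T p) y \<partial>D)"
    by simp
  also have "\<dots> = (\<integral>y. (\<Sum>p\<in>P. indicator (T p) y) \<partial>D)"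
    by (rule Bochner_Integration.integral_sum[where f = "\<lambda>p y. indicator (T p) y :: real", symmetric])
      (auto intro!: measure_pmf.integrable_const_bound[where B = 1])
  also have "\<dots> = (\<integral>y. real (card {p \<in> P. y \<in> T p}) \<partial>D)"
    using assms(1) by (simp add: indicator_def sum.If_cases Int_def)
  also have "\<dots> \<le> c"
    using assms by (intro measure_pmf.integral_le_const measure_pmf.integrable_const_bound[where B = "card P"])
      (auto simp: AE_measure_pmf_iff intro!: card_mono)
  finally show ?thesis .
qed

definition xor_list :: "bool list \<Rightarrow> bool list \<Rightarrow> bool list" where
  "xor_list u v = map2 (\<noteq>) u v"

lemma xor_list_Nil [simp]: "xor_list [] v = []"
  by (simp add: xor_list_def)

lemma xor_list_Cons [simp]: "xor_list (a # u) (c # v) = (a \<noteq> c) # xor_list u v"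
  by (simp add: xor_list_def)

lemma length_xor_list [simp]: "length (xor_list u v) = min (length u) (length v)"
  by (simp add: xor_list_def)

lemma xor_list_xor_list_cancel: "length u = length v \<Longrightarrow> xor_list (xor_list u v) v = u"
  by (induction u v rule: list_induct2) auto

lemma dotp_Nil [simp]: "dotp [] x = False" "dotp u [] = False"
  by (simp_all add: dotp_def)

lemma dotp_Cons [simp]: "dotp (a # u) (c # x) = ((a \<and> c) \<noteq> dotp u x)"
  by (auto simp add: dotp_def)

lemma dotp_commute: "dotp u x = dotp x u"
proof (induction u arbitrary: x)
  case (Cons a u) then show ?case by (cases x) auto
qed simp

lemma dotp_xor_list_left: "length u = length v \<Longrightarrow> dotp (xor_list u v) x = (dotp u x \<noteq> dotp v x)"
proof (induction u v arbitrary: x rule: list_induct2)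
  case (Cons a u c v) then show ?case by (cases x) auto
qed simp

lemma dotp_replicate_False_left [simp]: "dotp (replicate m False) x = False"
proof (induction m arbitrary: x)
  case (Suc m) then show ?case by (cases x) auto
qed simp

lemma dotp_unit_vector: "i < length u \<Longrightarrow> dotp ((replicate (length u) False)[i := True]) u = u ! i"
proof (induction u arbitrary: i)
  case (Cons a u) then show ?case by (cases i) auto
qed simp

lemma finite_cube [simp]: "finite (cube n)"
  using finite_lists_length_eq[of "UNIV :: bool set" n] by (simp add: cube_def)

lemma card_cube: "card (cube n) = 2 ^ n"
  using card_lists_length_eq[of "UNIV :: bool set" n] by (simp add: cube_def)

definition annihilator :: "nat \<Rightarrow> bool list set \<Rightarrow> bool list set" where
  "annihilator m W = {v \<in> cube m. \<forall>w \<in> W. \<not> dotp v w}"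

lemma annihilator_empty [simp]: "annihilator m {} = cube m"
  by (simp add: annihilator_def)

lemma annihilator_insert: "annihilator m (insert w W) = {v \<in> annihilator m W. \<not> dotp v w}"
  by (auto simp add: annihilator_def)

lemma finite_annihilator [simp]: "finite (annihilator m W)"
  by (simp add: annihilator_def)

lemma card_annihilator_dotp_eq:
  assumes "v\<^sub>0 \<in> annihilator m W" "dotp v\<^sub>0 y"
  shows "card {v \<in> annihilator m W. dotp v y} = card {v \<in> annihilator m W. \<not> dotp v y}"
proof (rule card_eq_card_if_involution[where \<tau> = "\<lambda>v. xor_list v v\<^sub>0"])
  fix v assume v: "v \<in> annihilator m W"
  then have len: "length v = length v\<^sub>0"
    using assms(1) by (simp add: annihilator_def cube_def)
  show "xor_list v v\<^sub>0 \<in> annihilator m W"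
    using v assms(1) len by (auto simp: annihilator_def cube_def dotp_xor_list_left)
  show "xor_list (xor_list v v\<^sub>0) v\<^sub>0 = v"
    using len by (rule xor_list_xor_list_cancel)
  show "dotp (xor_list v v\<^sub>0) y \<longleftrightarrow> \<not> dotp v y"
    using len assms(2) by (simp add: dotp_xor_list_left)
qed

lemma card_annihilator_dotp_le:
  "card {v \<in> annihilator m W. dotp v y} \<le> card {v \<in> annihilator m W. \<not> dotp v y}"
proof (cases "\<exists>v\<^sub>0 \<in> annihilator m W. dotp v\<^sub>0 y")
  case True
  then obtain v\<^sub>0 where "v\<^sub>0 \<in> annihilator m W" "dotp v\<^sub>0 y" by blast
  then show ?thesis by (simp add: card_annihilator_dotp_eq)
next
  case False
  then have "{v \<in> annihilator m W. dotp v y} = {}" by blast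
  then show ?thesis by (metis card.empty le0)
qed

lemma card_annihilator_dotp_le_half:
  "2 * card {v \<in> annihilator m W. dotp v y} \<le> card (annihilator m W)"
  using card_annihilator_dotp_le[of m W y]
    card_filter_add_card_filter_not[OF finite_annihilator[of m W], where P = "\<lambda>v. dotp v y"]
  by linarith

lemma card_annihilator_le_double_insert:
  "card (annihilator m W) \<le> 2 * card (annihilator m (insert w W))"
  using card_annihilator_dotp_le[of m W w]
    card_filter_add_card_filter_not[OF finite_annihilator[of m W], where P = "\<lambda>v. dotp v w"]
  by (simp add: annihilator_insert)

lemma card_annihilator_lower_bound:
  "finite W \<Longrightarrow> 2 ^ m \<le> card (annihilator m W) * 2 ^ card W"
proof (induction W rule: finite_induct)
  case empty then show ?case by (simp add: card_cube)
next
  case (insert w W)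
  have "2 ^ m \<le> card (annihilator m W) * 2 ^ card W" by (fact insert.IH)
  also have "\<dots> \<le> card (annihilator m (insert w W)) * 2 ^ card (insert w W)"
    using card_annihilator_le_double_insert[of m W w] insert.hyps by simp
  finally show ?case .
qed

lemma card_annihilator_ge:
  assumes "finite W" "card W \<le> q" "q \<le> m"
  shows "2 ^ (m - q) \<le> card (annihilator m W)"
proof -
  have "2 ^ (m - q) * 2 ^ q = (2 :: nat) ^ m"
    using assms(3) by (simp flip: power_add)
  also have "\<dots> \<le> card (annihilator m W) * 2 ^ card W"
    using assms(1) by (rule card_annihilator_lower_bound)
  also have "\<dots> \<le> card (annihilator m W) * 2 ^ q"
    using assms(2) by (simp add: power_increasing)
  finally show ?thesis
    by simp
qed

lemma BV_set_subset_cube: "BV_set n u b \<subseteq> cube n"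
  by (auto simp: BV_set_def)

lemma card_BV_set:
  assumes "u \<in> cube n" "u \<noteq> replicate n False"
  shows "card (BV_set n u b) = 2 ^ (n - 1)"
proof -
  have len: "length u = n"
    using assms(1) by (simp add: cube_def)
  then obtain i where i: "i < n" "u ! i"
    using assms(2) by (auto simp: list_eq_iff_nth_eq)
  have "(replicate n False)[i := True] \<in> annihilator n {}" "dotp ((replicate n False)[i := True]) u"
    using i len dotp_unit_vector[of i u] by (simp_all add: cube_def)
  then have "card {x \<in> cube n. dotp x u} = card {x \<in> cube n. \<not> dotp x u}"
    using card_annihilator_dotp_eq by fastforce
  moreover have "card {x \<in> cube n. dotp x u} + card {x \<in> cube n. \<not> dotp x u} = 2 * 2 ^ (n - 1)"
    using card_filter_add_card_filter_not[OF finite_cube] card_cube i(1)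
    by (simp flip: power_Suc)
  ultimately have "card {x \<in> cube n. dotp u x = b} = 2 ^ (n - 1)"
    by (cases b) (simp_all add: dotp_commute)
  then show ?thesis
    by (simp add: BV_set_def)
qed

definition BV_params :: "nat \<Rightarrow> (bool list \<times> bool) set" where
  "BV_params n = (cube n - {replicate n False}) \<times> UNIV"

lemma finite_BV_params [simp]: "finite (BV_params n)"
  by (simp add: BV_params_def)

lemma BV_params_nonempty:
  assumes "1 \<le> n"
  shows "BV_params n \<noteq> {}"
proof -
  have "(replicate n True, True) \<in> BV_params n"
    using assms by (cases n) (auto simp: BV_params_def cube_def)
  then show ?thesis
    by blast
qed

lemma card_BV_set_param:
  "(u, b) \<in> BV_params n \<Longrightarrow> card (BV_set n u b) = 2 ^ (n - 1)"
  unfolding BV_params_def by (blast intro: card_BV_set)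

lemma card_pairs_Cons: "card {(u, b) \<in> cube n \<times> UNIV. P (b # u)} = card {v \<in> cube (Suc n). P v}"
proof -
  let ?S = "{(u, b) \<in> cube n \<times> UNIV. P (b # u)}"
  have "{v \<in> cube (Suc n). P v} = (\<lambda>(u, b). b # u) ` ?S"
  proof (intro equalityI subsetI)
    fix v assume v: "v \<in> {v \<in> cube (Suc n). P v}"
    then obtain b u where "v = b # u" "u \<in> cube n"
      by (auto simp: cube_def length_Suc_conv)
    with v show "v \<in> (\<lambda>(u, b). b # u) ` ?S"
      by (auto intro: image_eqI[of _ _ "(u, b)"])
  qed (auto simp: cube_def)
  moreover have "inj_on (\<lambda>(u :: bool list, b). b # u) ?S"
    by (auto simp: inj_on_def)
  ultimately show ?thesis
    by (simp add: card_image)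
qed

lemma mem_BV_set_iff: "x \<in> BV_set n u b \<longleftrightarrow> x \<in> cube n \<and> \<not> dotp (b # u) (True # x)"
  by (auto simp: BV_set_def)

lemma consistent_param_iff:
  assumes "set xs \<subseteq> cube n" "xs \<noteq> []"
  shows "(u, b) \<in> BV_params n \<and> set xs \<subseteq> BV_set n u b \<longleftrightarrow>
    u \<in> cube n \<and> b # u \<in> annihilator (Suc n) (Cons True ` set xs) - {replicate (Suc n) False}"
proof -
  have "set xs \<subseteq> BV_set n u b \<longleftrightarrow> (\<forall>x \<in> set xs. \<not> dotp (b # u) (True # x))"
    using assms(1) by (auto simp: mem_BV_set_iff)
  moreover have "u \<noteq> replicate n False"
    if "\<not> dotp (b # u) (True # hd xs)" "b # u \<noteq> replicate (Suc n) False"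
    using that by auto
  ultimately show ?thesis
    using hd_in_set[OF assms(2)] by (auto simp: BV_params_def annihilator_def cube_def)
qed

lemma card_consistent_params_filter:
  assumes "set xs \<subseteq> cube n" "xs \<noteq> []"
  shows "card {(u, b) \<in> BV_params n. set xs \<subseteq> BV_set n u b \<and> P (b # u)}
    = card {v \<in> annihilator (Suc n) (Cons True ` set xs) - {replicate (Suc n) False}. P v}"
  (is "card ?L = card {v \<in> ?N - _. _}")
proof -
  have "?L = {(u, b) \<in> cube n \<times> UNIV. b # u \<in> ?N - {replicate (Suc n) False} \<and> P (b # u)}"
    using consistent_param_iff[OF assms] by blast
  also have "card \<dots> = card {v \<in> cube (Suc n). v \<in> ?N - {replicate (Suc n) False} \<and> P v}"
    by (rule card_pairs_Cons)
  also have "{v \<in> cube (Suc n). v \<in> ?N - {replicate (Suc n) False} \<and> P v}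
      = {v \<in> ?N - {replicate (Suc n) False}. P v}"
    by (auto simp: annihilator_def)
  finally show ?thesis .
qed

lemma card_consistent_params:
  assumes "set xs \<subseteq> cube n" "xs \<noteq> []"
  shows "card {(u, b) \<in> BV_params n. set xs \<subseteq> BV_set n u b}
    = card (annihilator (Suc n) (Cons True ` set xs)) - 1"
proof -
  let ?N = "annihilator (Suc n) (Cons True ` set xs)"
  let ?z = "replicate (Suc n) False"
  have "card {(u, b) \<in> BV_params n. set xs \<subseteq> BV_set n u b} = card {v \<in> ?N - {?z}. True}"
    using card_consistent_params_filter[OF assms, where P = "\<lambda>_. True"] by simp
  also have "{v \<in> ?N - {?z}. True} = ?N - {?z}"
    by blast
  also have "card (?N - {?z}) = card ?N - 1"
    by (rule card_Diff_singleton) (simp add: annihilator_def cube_def)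
  finally show ?thesis .
qed

lemma card_escaping_params:
  assumes "set xs \<subseteq> cube n" "xs \<noteq> []" "y \<in> cube n"
  shows "card {(u, b) \<in> BV_params n. set xs \<subseteq> BV_set n u b \<and> y \<notin> BV_set n u b}
    = card {v \<in> annihilator (Suc n) (Cons True ` set xs). dotp v (True # y)}"
proof -
  let ?N = "annihilator (Suc n) (Cons True ` set xs)"
  have "card {(u, b) \<in> BV_params n. set xs \<subseteq> BV_set n u b \<and> y \<notin> BV_set n u b}
      = card {v \<in> ?N - {replicate (Suc n) False}. dotp v (True # y)}"
    using card_consistent_params_filter[OF assms(1,2), where P = "\<lambda>v. dotp v (True # y)"] assms(3)
    by (simp add: mem_BV_set_iff)
  also have "{v \<in> ?N - {replicate (Suc n) False}. dotp v (True # y)} = {v \<in> ?N. dotp v (True # y)}"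
    by auto
  finally show ?thesis .
qed

definition BV_bound :: "nat \<Rightarrow> nat \<Rightarrow> real" where
  "BV_bound n q = 1/2 + 1 / (2 * (2 ^ (n - q + 1) - 1))"

lemma card_escaping_params_le:
  assumes "set xs \<subseteq> cube n" "length xs = q" "1 \<le> q" "q \<le> n" "y \<in> cube n"
  shows "real (card {(u, b) \<in> BV_params n. set xs \<subseteq> BV_set n u b \<and> y \<notin> BV_set n u b})
    \<le> BV_bound n q * real (card {(u, b) \<in> BV_params n. set xs \<subseteq> BV_set n u b})"
proof -
  let ?W = "Cons True ` set xs"
  let ?N = "annihilator (Suc n) ?W"
  have xs: "xs \<noteq> []"
    using assms(2,3) by auto
  have "card ?W \<le> q"
    using card_image_le[of "set xs" "Cons True"] card_length[of xs] assms(2) by simp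
  then have "2 ^ (n - q + 1) \<le> card ?N"
    using card_annihilator_ge[of ?W q "Suc n"] assms(4) by (simp add: Suc_diff_le)
  then have "(2 :: real) ^ (n - q + 1) \<le> card ?N"
    by (metis of_nat_le_iff of_nat_numeral of_nat_power)
  moreover have "(2 :: real) \<le> 2 ^ (n - q + 1)"
    by simp
  moreover have "2 * real (card {v \<in> ?N. dotp v (True # y)}) \<le> card ?N"
    using card_annihilator_dotp_le_half[of "Suc n" ?W "True # y"] by linarith
  ultimately have "real (card {v \<in> ?N. dotp v (True # y)})
      \<le> (1/2 + 1 / (2 * (2 ^ (n - q + 1) - 1))) * (real (card ?N) - 1)"
    by (intro le_half_bound)
  moreover have "1 \<le> card ?N"
    using \<open>2 ^ (n - q + 1) \<le> card ?N\<close> by (metis le_trans one_le_numeral one_le_power)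
  ultimately show ?thesis
    unfolding card_consistent_params[OF assms(1) xs] card_escaping_params[OF assms(1) xs assms(5)]
      BV_bound_def by simp
qed

lemma success_on_eq_average:
  assumes "(u, b) \<in> BV_params n"
  shows "success_on n q A u b = (\<Sum>xs | set xs \<subseteq> BV_set n u b \<and> length xs = q.
    measure_pmf.prob (A xs) (cube n - BV_set n u b)) / 2 ^ ((n - 1) * q)"
proof -
  let ?S = "BV_set n u b"
  let ?L = "{xs. set xs \<subseteq> ?S \<and> length xs = q}"
  have S: "finite ?S" "card ?S = 2 ^ (n - 1)"
    using finite_subset[OF BV_set_subset_cube] card_BV_set_param[OF assms] by auto
  then have "?S \<noteq> {}"
    by auto
  have L: "finite ?L" "card ?L = 2 ^ ((n - 1) * q)"
    using S by (simp_all add: finite_lists_length_eq card_lists_length_eq power_mult)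
  then have "?L \<noteq> {}"
    by (metis card.empty power_not_zero zero_neq_numeral)
  show ?thesis
    unfolding success_on_def replicate_pmf_of_set[OF S(1) \<open>?S \<noteq> {}\<close>]
      measure_bind_pmf_of_set[OF L(1) \<open>?L \<noteq> {}\<close>] L(2) by simp
qed

lemma success_eq_average:
  assumes "1 \<le> n"
  shows "success n q A = (\<Sum>(u, b)\<in>BV_params n. success_on n q A u b) / card (BV_params n)"
proof -
  have "measure_pmf.prob (case p of (u, b) \<Rightarrow> replicate_pmf q (pmf_of_set (BV_set n u b)) \<bind>
      (\<lambda>xs. map_pmf (\<lambda>y. y \<in> cube n - BV_set n u b) (A xs))) {True}
    = (case p of (u, b) \<Rightarrow> success_on n q A u b)" for p
    by (cases p) (simp add: success_on_def set_diff_eq vimage_def flip: map_bind_pmf)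
  then show ?thesis
    unfolding success_def BV_params_def[symmetric]
      measure_bind_pmf_of_set[OF finite_BV_params BV_params_nonempty[OF assms]] by presburger
qed

lemma sum_success_on_eq:
  "(\<Sum>(u, b)\<in>BV_params n. success_on n q A u b)
    = (\<Sum>xs | set xs \<subseteq> cube n \<and> length xs = q. \<Sum>p | p \<in> BV_params n \<and> set xs \<subseteq> case_prod (BV_set n) p.
        measure_pmf.prob (A xs) (cube n - case_prod (BV_set n) p)) / 2 ^ ((n - 1) * q)"
proof -
  let ?X = "{xs. set xs \<subseteq> cube n \<and> length xs = q}"
  have success_on: "success_on n q A u b = (\<Sum>xs | xs \<in> ?X \<and> set xs \<subseteq> BV_set n u b.
      measure_pmf.prob (A xs) (cube n - BV_set n u b)) / 2 ^ ((n - 1) * q)"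
    if "(u, b) \<in> BV_params n" for u b
  proof -
    have "{xs. set xs \<subseteq> BV_set n u b \<and> length xs = q} = {xs. xs \<in> ?X \<and> set xs \<subseteq> BV_set n u b}"
      using BV_set_subset_cube by blast
    then show ?thesis
      using success_on_eq_average[OF that] by simp
  qed
  have "(\<Sum>(u, b)\<in>BV_params n. success_on n q A u b)
      = (\<Sum>p\<in>BV_params n. (\<Sum>xs | xs \<in> ?X \<and> set xs \<subseteq> case_prod (BV_set n) p.
          measure_pmf.prob (A xs) (cube n - case_prod (BV_set n) p)) / 2 ^ ((n - 1) * q))"
    using success_on by (intro sum.cong) (auto split: prod.split)
  also have "\<dots> = (\<Sum>p\<in>BV_params n. \<Sum>xs | xs \<in> ?X \<and> set xs \<subseteq> case_prod (BV_set n) p.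
      measure_pmf.prob (A xs) (cube n - case_prod (BV_set n) p)) / 2 ^ ((n - 1) * q)"
    by (simp only: sum_divide_distrib)
  also have "(\<Sum>p\<in>BV_params n. \<Sum>xs | xs \<in> ?X \<and> set xs \<subseteq> case_prod (BV_set n) p.
      measure_pmf.prob (A xs) (cube n - case_prod (BV_set n) p))
    = (\<Sum>xs\<in>?X. \<Sum>p | p \<in> BV_params n \<and> set xs \<subseteq> case_prod (BV_set n) p.
      measure_pmf.prob (A xs) (cube n - case_prod (BV_set n) p))"
    by (rule sum.swap_restrict) (simp_all add: finite_lists_length_eq)
  finally show ?thesis .
qed

lemma sum_card_consistent_params:
  "(\<Sum>xs | set xs \<subseteq> cube n \<and> length xs = q. card {p \<in> BV_params n. set xs \<subseteq> case_prod (BV_set n) p})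
    = card (BV_params n) * 2 ^ ((n - 1) * q)"
proof -
  let ?X = "{xs. set xs \<subseteq> cube n \<and> length xs = q}"
  have "card {xs \<in> ?X. set xs \<subseteq> case_prod (BV_set n) p} = 2 ^ ((n - 1) * q)"
    if "p \<in> BV_params n" for p
  proof (cases p)
    case (Pair u b)
    then have "{xs \<in> ?X. set xs \<subseteq> case_prod (BV_set n) p} = {xs. set xs \<subseteq> BV_set n u b \<and> length xs = q}"
      using BV_set_subset_cube[of n u b] by auto
    moreover have "finite (BV_set n u b)"
      using BV_set_subset_cube by (rule finite_subset) simp
    ultimately show ?thesis
      using that Pair by (simp add: card_lists_length_eq card_BV_set_param power_mult)
  qed
  then show ?thesis
    using sum_card_filter_swap[OF finite_lists_length_eq[OF finite_cube] finite_BV_params,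
        where R = "\<lambda>xs p. set xs \<subseteq> case_prod (BV_set n) p"]
    by simp
qed

lemma sum_escape_prob_le:
  assumes "set xs \<subseteq> cube n" "length xs = q" "1 \<le> q" "q \<le> n" "set_pmf D \<subseteq> cube n"
  shows "(\<Sum>p | p \<in> BV_params n \<and> set xs \<subseteq> case_prod (BV_set n) p.
      measure_pmf.prob D (cube n - case_prod (BV_set n) p))
    \<le> BV_bound n q * card {p \<in> BV_params n. set xs \<subseteq> case_prod (BV_set n) p}"
proof (rule sum_measure_pmf_le)
  fix y assume "y \<in> set_pmf D"
  then have "y \<in> cube n"
    using assms(5) by blast
  then have "{p \<in> {p \<in> BV_params n. set xs \<subseteq> case_prod (BV_set n) p}. y \<in> cube n - case_prod (BV_set n) p}
      = {(u, b) \<in> BV_params n. set xs \<subseteq> BV_set n u b \<and> y \<notin> BV_set n u b}"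
    by auto
  moreover have "{p \<in> BV_params n. set xs \<subseteq> case_prod (BV_set n) p}
      = {(u, b) \<in> BV_params n. set xs \<subseteq> BV_set n u b}"
    by auto
  ultimately show "real (card {p \<in> {p \<in> BV_params n. set xs \<subseteq> case_prod (BV_set n) p}.
      y \<in> cube n - case_prod (BV_set n) p})
    \<le> BV_bound n q * card {p \<in> BV_params n. set xs \<subseteq> case_prod (BV_set n) p}"
    using card_escaping_params_le[OF assms(1-4) \<open>y \<in> cube n\<close>] by simp
qed simp

lemma sum_success_on_le:
  assumes "1 \<le> q" "q \<le> n" "\<And>xs. set_pmf (A xs) \<subseteq> cube n"
  shows "(\<Sum>(u, b)\<in>BV_params n. success_on n q A u b) \<le> BV_bound n q * card (BV_params n)"
proof -
  let ?X = "{xs. set xs \<subseteq> cube n \<and> length xs = q}"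
  let ?K = "2 ^ ((n - 1) * q) :: real"
  have "(\<Sum>(u, b)\<in>BV_params n. success_on n q A u b)
      \<le> (\<Sum>xs\<in>?X. BV_bound n q * card {p \<in> BV_params n. set xs \<subseteq> case_prod (BV_set n) p}) / ?K"
    unfolding sum_success_on_eq using assms
    by (intro divide_right_mono sum_mono sum_escape_prob_le) auto
  also have "\<dots> = BV_bound n q * card (BV_params n)"
    by (simp add: sum_card_consistent_params flip: sum_distrib_left of_nat_sum)
  finally show ?thesis .
qed

theorem mainTheorem2:
  fixes n q :: nat and A :: "bool list list \<Rightarrow> bool list pmf"
  assumes "n \<ge> 1" and "1 \<le> q" and "q \<le> n"
    and "\<And>xs. set_pmf (A xs) \<subseteq> cube n"
  shows "success n q A \<le> 1/2 + 1 / (2 * (2 ^ (n - q + 1) - 1))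
     \<and> (\<exists>u \<in> cube n - {replicate n False}. \<exists>b.
          success_on n q A u b \<le> 1/2 + 1 / (2 * (2 ^ (n - q + 1) - 1)))"
proof -
  have sum_le: "(\<Sum>(u, b)\<in>BV_params n. success_on n q A u b) \<le> BV_bound n q * card (BV_params n)"
    using assms(2-4) by (rule sum_success_on_le)
  have nonempty: "BV_params n \<noteq> {}"
    using assms(1) by (rule BV_params_nonempty)
  then have "success n q A \<le> BV_bound n q"
    using sum_le unfolding success_eq_average[OF assms(1)] by (simp add: divide_le_eq card_gt_0_iff)
  moreover obtain u b where "(u, b) \<in> BV_params n" "success_on n q A u b \<le> BV_bound n q"
    using ex_le_of_sum_le[OF finite_BV_params nonempty sum_le] by auto
  ultimately show ?thesis
    unfolding BV_bound_def BV_params_def by blast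
qed

end
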